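(* Let $A\subseteq2^{\mathbb N}$ be analytic and non-Borel. Let $\phi$ be any $\mathbf\Pi^1_1$-rank on $\mathcal L^A_{\mathbf f}$ and $\psi$ any $\mathbf\Pi^1_1$-rank on $\mathcal L^A_{\mathbf f,0}$. Then there is no map $\Phi:\omega_1\to\omega_1$ such that $\psi(L)\le\Phi(\phi(L))$ for all $L\in\mathcal L^A_{\mathbf f,0}$.
   Context: Fix a bijection $h:2^{<\mathbb N}\to\mathbb N$ with $h(s)<h(t)$ whenever $|s|<|t|$ and let $s_n=h^{-1}(n)$. For $s\in2^{<\mathbb N}$ let $V_s=\{\sigma\in2^{\mathbb N}:s\sqsubset\sigma\}$, and let $f_n=\chi_{V_{s_n}}$. $[\mathbb N]$ is the set of infinite subsets of $\mathbb N$ (Polish subspace of $2^{\mathbb N}$). Define $\mathcal L^A_{\mathbf f}=\{L\in[\mathbb N]:(f_n|_A)_{n\in L}\text{ converges pointwise on }A\}$ and $\mathcal L^A_{\mathbf f,0}=\{L\in[\mathbb N]:(f_n|_A)_{n\in L}\text{ converges pointwise to }0\text{ on }A\}$; both are $\mathbf\Pi^1_1$. For a $\mathbf\Pi^1_1$ set $B$ in a Polish space, $\phi:B\to\omega_1$ is a $\mathbf\Pi^1_1$-rank if there are relations $\le_\Sigma\in\mathbf\Sigma^1_1$, $\le_\Pi\in\mathbf\Pi^1_1$ such that for all $y\in B$ and all $x$: $(x\in B\wedge\phi(x)\le\phi(y))\iff x\le_\Sigma y\iff x\le_\Pi y$. *)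

theory Defs
  imports "HOL-Analysis.Analysis" "HOL-Library.Infinite_Set"
begin

definition cantor_top :: "(nat \<Rightarrow> bool) topology" where
  "cantor_top = product_topology (\<lambda>_. discrete_topology UNIV) UNIV"

definition baire_top :: "(nat \<Rightarrow> nat) topology" where
  "baire_top = product_topology (\<lambda>_. discrete_topology UNIV) UNIV"

definition cantor_borel :: "(nat \<Rightarrow> bool) set set" where
  "cantor_borel = sigma_sets UNIV {U. openin cantor_top U}"

definition analytic_in :: "'a topology \<Rightarrow> 'a set \<Rightarrow> bool" where
  "analytic_in X S \<longleftrightarrow> S \<subseteq> topspace X \<and>
     (S = {} \<or> (\<exists>g. continuous_map baire_top X g \<and> g ` UNIV = S))"

definition coanalytic_in :: "'a topology \<Rightarrow> 'a set \<Rightarrow> bool" where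
  "coanalytic_in X S \<longleftrightarrow> S \<subseteq> topspace X \<and> analytic_in X (topspace X - S)"

text \<open>[N]: infinite subsets of N, as a subspace of Cantor space (L is identified with {n. L n}).\<close>
definition infsets_top :: "(nat \<Rightarrow> bool) topology" where
  "infsets_top = subtopology cantor_top {L. infinite {n. L n}}"

definition Vs :: "bool list \<Rightarrow> (nat \<Rightarrow> bool) set" where
  "Vs s = {\<sigma>. \<forall>i<length s. \<sigma> i = s ! i}"

definition fseq :: "(bool list \<Rightarrow> nat) \<Rightarrow> nat \<Rightarrow> (nat \<Rightarrow> bool) \<Rightarrow> real" where
  "fseq h n \<sigma> = indicator (Vs (inv h n)) \<sigma>"

text \<open>L^A_f and L^A_{f,0}: the subsequence (f_n)_{n in L} is indexed by the increasing enumeration of L.\<close>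
definition Lf :: "(bool list \<Rightarrow> nat) \<Rightarrow> (nat \<Rightarrow> bool) set \<Rightarrow> (nat \<Rightarrow> bool) set" where
  "Lf h A = {L. infinite {n. L n} \<and>
     (\<forall>\<sigma>\<in>A. convergent (\<lambda>k. fseq h (enumerate {n. L n} k) \<sigma>))}"

definition Lf0 :: "(bool list \<Rightarrow> nat) \<Rightarrow> (nat \<Rightarrow> bool) set \<Rightarrow> (nat \<Rightarrow> bool) set" where
  "Lf0 h A = {L. infinite {n. L n} \<and>
     (\<forall>\<sigma>\<in>A. (\<lambda>k. fseq h (enumerate {n. L n} k) \<sigma>) \<longlonglongrightarrow> 0)}"

definition pi11_rank :: "'a topology \<Rightarrow> 'a set \<Rightarrow> ('a \<Rightarrow> 'w::wellorder) \<Rightarrow> bool" where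
  "pi11_rank X B \<phi> \<longleftrightarrow>
     (\<exists>RS RP. analytic_in (prod_topology X X) RS \<and> coanalytic_in (prod_topology X X) RP \<and>
        (\<forall>y\<in>B. \<forall>x\<in>topspace X.
            ((x \<in> B \<and> \<phi> x \<le> \<phi> y) \<longleftrightarrow> (x, y) \<in> RS) \<and> ((x, y) \<in> RS \<longleftrightarrow> (x, y) \<in> RP)))"

end

theory Submission
  imports Defs
begin

text \<open>
  The proof embeds the complement of A into both sets of subsequences continuously.  For
  \<sigma> in Cantor space, the branch set codes the initial segments of \<sigma>; along it the indicators
  f_n converge everywhere, to 0 exactly off \<sigma>.  So it always lies in L^A_f, and it lies in
  L^A_{f,0} iff \<sigma> is not in A.  The zigzag set alternates initial segments of \<sigma> with their
  neighbours; along it the f_n diverge exactly at \<sigma>, so it lies in L^A_f iff \<sigma> is not in A.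
  Since the complement of A is not analytic (Suslin's theorem, proved here via Lusin separation),
  the rank comparison relations of a Pi^1_1-rank (which are analytic) show:
  (1) a rank on L^A_f is bounded on all branch sets, and
  (2) a rank on L^A_{f,0} takes uncountably many values on branch sets of points outside A.
  A map \<Phi> with \<psi> \<le> \<Phi> \<circ> \<phi> would bound these uncountably many values by the countably many
  values of \<Phi> below the bound from (1), which is impossible in an order of type \<omega>_1.
\<close>

abbreviation seq_top :: "(nat \<Rightarrow> 'a) topology" where
  "seq_top \<equiv> product_topology (\<lambda>_. discrete_topology UNIV) UNIV"

lemma topspace_seq_top [simp]: "topspace (seq_top :: (nat \<Rightarrow> 'a) topology) = UNIV"
  by (simp add: PiE_UNIV_domain)

lemma topspace_cantor [simp]: "topspace cantor_top = UNIV"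
  by (simp add: cantor_top_def)

lemma topspace_baire [simp]: "topspace baire_top = UNIV"
  by (simp add: baire_top_def)

lemma openin_seq_top_iff:
  "openin (seq_top :: (nat \<Rightarrow> 'a) topology) S \<longleftrightarrow>
     (\<forall>x\<in>S. \<exists>m. \<forall>y. (\<forall>i<m. y i = x i) \<longrightarrow> y \<in> S)"
  unfolding openin_product_topology_alt
proof (intro iffI ballI)
  fix x assume x: "x \<in> S" and
    open_S: "\<forall>x\<in>S. \<exists>U. finite {i \<in> UNIV. U i \<noteq> topspace (discrete_topology UNIV)} \<and>
        (\<forall>i\<in>UNIV. openin (discrete_topology UNIV) (U i)) \<and> x \<in> Pi\<^sub>E UNIV U \<and> Pi\<^sub>E UNIV U \<subseteq> S"
  then obtain U :: "nat \<Rightarrow> 'a set" where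
    U: "finite {i. U i \<noteq> UNIV}" "x \<in> Pi\<^sub>E UNIV U" "Pi\<^sub>E UNIV U \<subseteq> S"
    by auto
  then obtain m where m: "{i. U i \<noteq> UNIV} \<subseteq> {..<m}"
    using finite_nat_iff_bounded by auto
  have "y \<in> S" if y: "\<forall>i<m. y i = x i" for y
  proof -
    have "y i \<in> U i" for i
      using y m U(2) by (cases "i < m") (auto simp: PiE_def Pi_def)
    then show ?thesis using U(3) by (auto simp: PiE_def Pi_def)
  qed
  then show "\<exists>m. \<forall>y. (\<forall>i<m. y i = x i) \<longrightarrow> y \<in> S" by blast
next
  fix x assume x: "x \<in> S" and cyl: "\<forall>x\<in>S. \<exists>m. \<forall>y. (\<forall>i<m. y i = x i) \<longrightarrow> y \<in> S"
  then obtain m where m: "\<forall>y. (\<forall>i<m. y i = x i) \<longrightarrow> y \<in> S" by blast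
  define U where "U i = (if i < m then {x i} else UNIV)" for i
  have "finite {i \<in> UNIV. U i \<noteq> topspace (discrete_topology UNIV)}"
    by (rule finite_subset[of _ "{..<m}"]) (auto simp: U_def)
  moreover have "x \<in> Pi\<^sub>E UNIV U" by (auto simp: U_def)
  moreover have "Pi\<^sub>E UNIV U \<subseteq> S"
    using m by (auto simp: U_def PiE_def Pi_def split: if_splits)
  ultimately show "\<exists>U. finite {i \<in> UNIV. U i \<noteq> topspace (discrete_topology UNIV)} \<and>
      (\<forall>i\<in>UNIV. openin (discrete_topology UNIV) (U i)) \<and> x \<in> Pi\<^sub>E UNIV U \<and> Pi\<^sub>E UNIV U \<subseteq> S"
    by auto
qed

definition locally_determined :: "((nat \<Rightarrow> 'a) \<Rightarrow> 'b) \<Rightarrow> bool" where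
  "locally_determined f \<longleftrightarrow> (\<forall>x. \<exists>m. \<forall>y. (\<forall>i<m. y i = x i) \<longrightarrow> f y = f x)"

lemma locally_determined_coordinate: "locally_determined (\<lambda>x. g (x k))"
  unfolding locally_determined_def by (metis lessI)

lemma locally_determined_eval [simp]: "locally_determined (\<lambda>x. x k)"
  using locally_determined_coordinate[where g="\<lambda>v. v"] .

lemma continuous_map_discrete_iff_locally_determined:
  "continuous_map (seq_top :: (nat \<Rightarrow> 'a) topology) (discrete_topology UNIV) f \<longleftrightarrow>
     locally_determined f"
proof
  assume cont: "continuous_map seq_top (discrete_topology UNIV) f"
  show "locally_determined f" unfolding locally_determined_def
  proof
    fix x
    have "openin seq_top {y \<in> topspace seq_top. f y \<in> {f x}}"
      by (rule openin_continuous_map_preimage[OF cont]) simp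
    then have "x \<in> {y. f y = f x} \<longrightarrow> (\<exists>m. \<forall>y. (\<forall>i<m. y i = x i) \<longrightarrow> y \<in> {y. f y = f x})"
      unfolding openin_seq_top_iff by simp
    then show "\<exists>m. \<forall>y. (\<forall>i<m. y i = x i) \<longrightarrow> f y = f x" by simp
  qed
next
  assume loc: "locally_determined f"
  have "openin seq_top {x. f x \<in> U}" for U
    unfolding openin_seq_top_iff
  proof
    fix x assume x: "x \<in> {x. f x \<in> U}"
    obtain m where m: "\<forall>y. (\<forall>i<m. y i = x i) \<longrightarrow> f y = f x"
      using loc unfolding locally_determined_def by blast
    show "\<exists>m. \<forall>y. (\<forall>i<m. y i = x i) \<longrightarrow> y \<in> {x. f x \<in> U}"
    proof (intro exI allI impI)
      fix y assume "\<forall>i<m. y i = x i"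
      then have "f y = f x" using m by blast
      then show "y \<in> {x. f x \<in> U}" using x by simp
    qed
  qed
  then show "continuous_map seq_top (discrete_topology UNIV) f"
    unfolding continuous_map_def by simp
qed

lemma continuous_map_seq_top_iff:
  "continuous_map (seq_top :: (nat \<Rightarrow> 'a) topology) (seq_top :: (nat \<Rightarrow> 'b) topology) f \<longleftrightarrow>
     (\<forall>n. locally_determined (\<lambda>x. f x n))"
  unfolding continuous_map_componentwise_UNIV continuous_map_discrete_iff_locally_determined ..

text \<open>A closed nonempty subset F of Baire space is a continuous image of Baire space, namely of a
  continuous retraction onto F.\<close>

definition extendable :: "(nat \<Rightarrow> nat) set \<Rightarrow> nat \<Rightarrow> (nat \<Rightarrow> nat) \<Rightarrow> bool" where
  "extendable F k x \<longleftrightarrow> (\<exists>z\<in>F. \<forall>i<k. z i = x i)"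

definition escape_depth :: "(nat \<Rightarrow> nat) set \<Rightarrow> (nat \<Rightarrow> nat) \<Rightarrow> nat" where
  "escape_depth F x = (LEAST k. \<not> extendable F k x)"

lemma extendable_cong: "\<forall>i<k. y i = x i \<Longrightarrow> extendable F k y \<longleftrightarrow> extendable F k x"
  by (auto simp: extendable_def)

lemma extendable_mono: "extendable F k x \<Longrightarrow> j \<le> k \<Longrightarrow> extendable F j x"
  unfolding extendable_def by (meson less_le_trans)

lemma escape_depth:
  assumes closed: "closedin baire_top F" and ne: "F \<noteq> {}" and x: "x \<notin> F"
  shows "\<not> extendable F (escape_depth F x) x" and "\<forall>j<escape_depth F x. extendable F j x"
    and "escape_depth F x > 0"
proof -
  have "openin seq_top (UNIV - F)" using closed by (simp add: closedin_def baire_top_def)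
  moreover have "x \<in> UNIV - F" using x by simp
  ultimately obtain m where m: "\<forall>y. (\<forall>i<m. y i = x i) \<longrightarrow> y \<in> UNIV - F"
    unfolding openin_seq_top_iff by (elim bspec[elim_format] exE)
  have "\<not> extendable F m x"
  proof
    assume "extendable F m x"
    then obtain z where "z \<in> F" "\<forall>i<m. z i = x i" unfolding extendable_def by blast
    then show False using m by auto
  qed
  then show not_ext: "\<not> extendable F (escape_depth F x) x"
    unfolding escape_depth_def by (rule LeastI)
  show "\<forall>j<escape_depth F x. extendable F j x"
  proof (intro allI impI)
    fix j assume "j < escape_depth F x"
    then show "extendable F j x"
      unfolding escape_depth_def using not_less_Least[of j "\<lambda>k. \<not> extendable F k x"] by blast
  qed
  have "extendable F 0 x" using ne by (auto simp: extendable_def)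
  with not_ext show "escape_depth F x > 0" by (metis gr0I)
qed

lemma escape_depth_cong:
  assumes closed: "closedin baire_top F" and ne: "F \<noteq> {}" and x: "x \<notin> F"
    and agree: "\<forall>i<escape_depth F x. y i = x i"
  shows "y \<notin> F" and "escape_depth F y = escape_depth F x"
proof -
  have same: "extendable F j y \<longleftrightarrow> extendable F j x" if "j \<le> escape_depth F x" for j
    using agree that by (intro extendable_cong) auto
  show "y \<notin> F"
  proof
    assume "y \<in> F"
    then have "extendable F (escape_depth F x) y" using agree by (auto simp: extendable_def)
    then show False using same escape_depth(1)[OF closed ne x] by blast
  qed
  show "escape_depth F y = escape_depth F x"
    unfolding escape_depth_def[of F y]
  proof (rule Least_equality)
    show "\<not> extendable F (escape_depth F x) y" using same escape_depth(1)[OF closed ne x] by blast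
    show "escape_depth F x \<le> k" if "\<not> extendable F k y" for k
      using that same escape_depth(2)[OF closed ne x] by (meson less_imp_le not_le)
  qed
qed

definition retraction :: "(nat \<Rightarrow> nat) set \<Rightarrow> (nat \<Rightarrow> nat) \<Rightarrow> nat \<Rightarrow> nat" where
  "retraction F x = (if x \<in> F then x else SOME z. z \<in> F \<and> (\<forall>i<escape_depth F x - 1. z i = x i))"

lemma retraction_outside:
  assumes closed: "closedin baire_top F" and ne: "F \<noteq> {}" and x: "x \<notin> F"
  shows "retraction F x \<in> F \<and> (\<forall>i<escape_depth F x - 1. retraction F x i = x i)"
proof -
  let ?P = "\<lambda>z. z \<in> F \<and> (\<forall>i<escape_depth F x - 1. z i = x i)"
  have "extendable F (escape_depth F x - 1) x" using escape_depth(2,3)[OF closed ne x] by simp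
  then obtain z where "?P z" unfolding extendable_def by blast
  then have "?P (SOME z. ?P z)" by (rule someI[where P = ?P])
  then show ?thesis using x by (simp add: retraction_def)
qed

lemma range_retraction:
  assumes "closedin baire_top F" and "F \<noteq> {}"
  shows "range (retraction F) = F"
proof -
  have "retraction F x \<in> F" for x
    using retraction_outside[OF assms] by (cases "x \<in> F") (auto simp: retraction_def)
  moreover have "x \<in> range (retraction F)" if "x \<in> F" for x
    using that rangeI[of "retraction F" x] by (simp add: retraction_def)
  ultimately show ?thesis by blast
qed

text \<open>Continuity: near a point of F the retraction is close to the identity, because nearby
  points outside F escape late; near a point outside F it is locally constant, because nearby
  points escape at the same depth and are sent to the same point.\<close>

lemma continuous_retraction:
  assumes closed: "closedin baire_top F" and ne: "F \<noteq> {}"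
  shows "continuous_map baire_top baire_top (retraction F)"
  unfolding baire_top_def continuous_map_seq_top_iff locally_determined_def
proof (intro allI)
  fix n x
  show "\<exists>m. \<forall>y. (\<forall>i<m. y i = x i) \<longrightarrow> retraction F y n = retraction F x n"
  proof (cases "x \<in> F")
    case True
    have "retraction F y n = x n" if agree: "\<forall>i<Suc n. y i = x i" for y
    proof (cases "y \<in> F")
      case False
      have "extendable F (Suc n) y" using True agree by (auto simp: extendable_def)
      then have "Suc n < escape_depth F y"
        using escape_depth(1)[OF closed ne False] extendable_mono not_less by blast
      then show ?thesis using retraction_outside[OF closed ne False] agree by simp
    qed (use agree in \<open>simp add: retraction_def\<close>)
    moreover have "retraction F x = x" using True by (simp add: retraction_def)
    ultimately show ?thesis by metis
  next
    case False
    have same: "retraction F y = retraction F x" if agree: "\<forall>i<escape_depth F x. y i = x i" for y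
    proof -
      have "(\<lambda>z. z \<in> F \<and> (\<forall>i<escape_depth F x - 1. z i = y i)) =
            (\<lambda>z. z \<in> F \<and> (\<forall>i<escape_depth F x - 1. z i = x i))"
        using agree by auto
      then show ?thesis
        using escape_depth_cong[OF closed ne False agree] False by (simp add: retraction_def)
    qed
    show ?thesis
    proof (intro exI allI impI)
      fix y assume "\<forall>i<escape_depth F x. y i = x i"
      from same[OF this] show "retraction F y n = retraction F x n" by simp
    qed
  qed
qed

lemma continuous_map_into_infsets:
  assumes "continuous_map X cantor_top f" and "\<And>x. x \<in> topspace X \<Longrightarrow> infinite {n. f x n}"
  shows "continuous_map X infsets_top f"
  unfolding infsets_top_def continuous_map_in_subtopology
  using assms continuous_map_image_subset_topspace by blast

definition split_seq :: "(nat \<Rightarrow> nat) \<Rightarrow> (nat \<Rightarrow> bool) \<times> (nat \<Rightarrow> nat)" where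
  "split_seq w = ((\<lambda>n. w (2 * n) \<noteq> 0), (\<lambda>n. w (2 * n + 1)))"

lemma continuous_split_seq:
  "continuous_map baire_top (prod_topology cantor_top baire_top) split_seq"
  unfolding continuous_map_pairwise baire_top_def cantor_top_def continuous_map_seq_top_iff o_def
  by (simp add: split_seq_def locally_determined_coordinate)

lemma surj_split_seq: "surj split_seq"
  unfolding surj_def
proof
  fix p :: "(nat \<Rightarrow> bool) \<times> (nat \<Rightarrow> nat)"
  obtain \<sigma> z where p: "p = (\<sigma>, z)" by fastforce
  have "split_seq (\<lambda>n. if even n then (if \<sigma> (n div 2) then 1 else 0) else z (n div 2)) = p"
    unfolding p by (auto simp: split_seq_def)
  then show "\<exists>w. p = split_seq w" by (metis)
qed

lemma analytic_projection_of_closed: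
  fixes F :: "((nat \<Rightarrow> bool) \<times> (nat \<Rightarrow> nat)) set"
  assumes closed: "closedin (prod_topology cantor_top baire_top) F"
  shows "analytic_in cantor_top (fst ` F)"
proof (cases "F = {}")
  case True then show ?thesis by (simp add: analytic_in_def)
next
  case False
  define F' where "F' = split_seq -` F"
  have "closedin baire_top F'"
    using closedin_continuous_map_preimage[OF continuous_split_seq closed] by (simp add: F'_def vimage_def)
  moreover have image: "split_seq ` F' = F"
    unfolding F'_def using surj_split_seq by (simp add: image_vimage_eq)
  moreover have "F' \<noteq> {}" using False image by auto
  ultimately have r: "continuous_map baire_top baire_top (retraction F')" "range (retraction F') = F'"
    using continuous_retraction range_retraction by blast+
  have "continuous_map baire_top cantor_top (fst \<circ> (split_seq \<circ> retraction F'))"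
    by (rule continuous_map_compose[OF continuous_map_compose[OF r(1) continuous_split_seq]
          continuous_map_fst])
  moreover have "range (fst \<circ> (split_seq \<circ> retraction F')) = fst ` F"
  proof -
    have "range (fst \<circ> (split_seq \<circ> retraction F')) = fst ` split_seq ` range (retraction F')"
      by (simp add: image_comp)
    then show ?thesis using r(2) image by simp
  qed
  ultimately show ?thesis unfolding analytic_in_def by (intro conjI disjI2 exI) (simp_all add: o_def)
qed

text \<open>Writing S as the range of g, this set is the projection of the closed
  set of pairs (\<sigma>, w) with g (odd part of w) = p (\<sigma>, even part of w).\<close>

lemma analytic_exists_preimage:
  assumes Y: "Hausdorff_space Y" and S: "analytic_in Y S"
    and p: "continuous_map (prod_topology cantor_top baire_top) Y p"
  shows "analytic_in cantor_top {\<sigma>. \<exists>z. p (\<sigma>, z) \<in> S}"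
proof (cases "S = {}")
  case True then show ?thesis by (simp add: analytic_in_def)
next
  case False
  then obtain g where g: "continuous_map baire_top Y g" "range g = S"
    using S unfolding analytic_in_def by blast
  define evens where "evens w = (\<lambda>n. w (2 * n))" for w :: "nat \<Rightarrow> nat"
  define odds where "odds w = (\<lambda>n. w (2 * n + 1))" for w :: "nat \<Rightarrow> nat"
  have evens: "continuous_map baire_top baire_top evens"
    and odds: "continuous_map baire_top baire_top odds"
    unfolding baire_top_def continuous_map_seq_top_iff evens_def odds_def by simp_all
  have c1: "continuous_map (prod_topology cantor_top baire_top) Y (g \<circ> (odds \<circ> snd))"
    by (intro continuous_map_compose[OF continuous_map_compose[OF continuous_map_snd odds] g(1)])
  have "continuous_map (prod_topology cantor_top baire_top) (prod_topology cantor_top baire_top)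
          (\<lambda>x. (fst x, evens (snd x)))"
    using continuous_map_compose[OF continuous_map_snd evens]
    by (simp add: continuous_map_pairwise o_def continuous_map_fst)
  then have c2: "continuous_map (prod_topology cantor_top baire_top) Y (p \<circ> (\<lambda>x. (fst x, evens (snd x))))"
    using p by (rule continuous_map_compose)
  define F where "F = {x \<in> topspace (prod_topology cantor_top baire_top).
                         g (odds (snd x)) = p (fst x, evens (snd x))}"
  have "closedin (prod_topology cantor_top baire_top) F"
    unfolding F_def using closedin_continuous_maps_eq[OF Y c1 c2] by (simp add: o_def)
  moreover have "fst ` F = {\<sigma>. \<exists>z. p (\<sigma>, z) \<in> S}"
  proof (intro equalityI subsetI)
    fix \<sigma> assume "\<sigma> \<in> fst ` F"
    then obtain w where "g (odds w) = p (\<sigma>, evens w)" unfolding F_def by auto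
    then show "\<sigma> \<in> {\<sigma>. \<exists>z. p (\<sigma>, z) \<in> S}" using g(2) by (metis mem_Collect_eq rangeI)
  next
    fix \<sigma> assume "\<sigma> \<in> {\<sigma>. \<exists>z. p (\<sigma>, z) \<in> S}"
    then obtain z where "p (\<sigma>, z) \<in> range g" using g(2) by blast
    then obtain z' where z': "g z' = p (\<sigma>, z)" by (metis rangeE)
    define w where "w n = (if even n then z (n div 2) else z' (n div 2))" for n
    have "evens w = z" "odds w = z'" unfolding w_def evens_def odds_def by auto
    then have "(\<sigma>, w) \<in> F" unfolding F_def using z' by simp
    then show "\<sigma> \<in> fst ` F" by force
  qed
  ultimately show ?thesis using analytic_projection_of_closed by metis
qed

text \<open>If the images of two cylinders cannot be separated, then neither can the images of some pair
  of one-step extensions; iterating yields two points of Baire space whose images coincide.\<close>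

definition borel_separated :: "(nat \<Rightarrow> bool) set \<Rightarrow> (nat \<Rightarrow> bool) set \<Rightarrow> bool" where
  "borel_separated P Q \<longleftrightarrow> (\<exists>C\<in>cantor_borel. P \<subseteq> C \<and> C \<inter> Q = {})"

lemma borel_separated_Union_left:
  assumes "\<And>i::nat. borel_separated (P i) Q" shows "borel_separated (\<Union>i. P i) Q"
proof -
  from assms obtain C where C: "\<And>i. C i \<in> cantor_borel \<and> P i \<subseteq> C i \<and> C i \<inter> Q = {}"
    unfolding borel_separated_def by metis
  then have "(\<Union>i. C i) \<in> cantor_borel"
    unfolding cantor_borel_def by (intro sigma_sets.Union) blast
  moreover have "(\<Union>i. P i) \<subseteq> (\<Union>i. C i)" and "(\<Union>i. C i) \<inter> Q = {}" using C by blast+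
  ultimately show ?thesis unfolding borel_separated_def by blast
qed

lemma borel_separated_Union_right:
  assumes "\<And>j::nat. borel_separated P (Q j)" shows "borel_separated P (\<Union>j. Q j)"
proof -
  from assms obtain C where C: "\<And>j. C j \<in> cantor_borel \<and> P \<subseteq> C j \<and> C j \<inter> Q j = {}"
    unfolding borel_separated_def by metis
  then have "(\<Inter>j. C j) \<in> cantor_borel"
    unfolding cantor_borel_def by (intro sigma_sets_Inter) blast+
  moreover have "P \<subseteq> (\<Inter>j. C j)" and "(\<Inter>j. C j) \<inter> (\<Union>j. Q j) = {}" using C by blast+
  ultimately show ?thesis unfolding borel_separated_def by blast
qed

lemma cantor_borel_coordinate: "{\<sigma>. \<sigma> n = b} \<in> cantor_borel"
proof -
  have "openin cantor_top {\<sigma>. \<sigma> n = b}"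
    unfolding cantor_top_def openin_seq_top_iff by (intro ballI exI[of _ "Suc n"]) auto
  then show ?thesis unfolding cantor_borel_def by (intro sigma_sets.Basic) simp
qed

definition baire_cylinder :: "nat list \<Rightarrow> (nat \<Rightarrow> nat) set" where
  "baire_cylinder s = {z. \<forall>i<length s. z i = s ! i}"

lemma baire_cylinder_split: "baire_cylinder s = (\<Union>i. baire_cylinder (s @ [i]))"
proof (intro equalityI subsetI)
  fix z assume "z \<in> baire_cylinder s"
  then have "z \<in> baire_cylinder (s @ [z (length s)])"
    unfolding baire_cylinder_def by (auto simp: nth_append less_Suc_eq)
  then show "z \<in> (\<Union>i. baire_cylinder (s @ [i]))" by blast
qed (auto simp: baire_cylinder_def nth_append)

lemma not_separated_extension:
  assumes "\<not> borel_separated (g ` baire_cylinder s) (g' ` baire_cylinder t)"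
  shows "\<exists>i j. \<not> borel_separated (g ` baire_cylinder (s @ [i])) (g' ` baire_cylinder (t @ [j]))"
proof (rule ccontr)
  assume "\<not> ?thesis"
  then have "borel_separated (\<Union>i. g ` baire_cylinder (s @ [i])) (\<Union>j. g' ` baire_cylinder (t @ [j]))"
    by (blast intro: borel_separated_Union_left borel_separated_Union_right)
  then show False
    using assms baire_cylinder_split[of s] baire_cylinder_split[of t] by (simp add: image_UN)
qed

lemma inseparable_points:
  fixes g g' :: "(nat \<Rightarrow> nat) \<Rightarrow> nat \<Rightarrow> bool"
  assumes bad0: "\<not> borel_separated (range g) (range g')"
  shows "\<exists>x y. \<forall>k. \<not> borel_separated (g ` {z. \<forall>i<k. z i = x i}) (g' ` {z. \<forall>i<k. z i = y i})"
proof -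
  define bad where "bad p \<longleftrightarrow>
      \<not> borel_separated (g ` baire_cylinder (fst p)) (g' ` baire_cylinder (snd p))" for p
  define next_pair where
    "next_pair p = (SOME q. \<exists>i j. q = (fst p @ [i], snd p @ [j]) \<and> bad q)" for p
  define st where "st k = (next_pair ^^ k) ([], [])" for k
  have next_pair: "\<exists>i j. next_pair p = (fst p @ [i], snd p @ [j]) \<and> bad (next_pair p)"
    if "bad p" for p
  proof -
    have "\<exists>q. \<exists>i j. q = (fst p @ [i], snd p @ [j]) \<and> bad q"
      using not_separated_extension that unfolding bad_def by fastforce
    then show ?thesis unfolding next_pair_def by (rule someI_ex)
  qed
  have st_bad: "bad (st k)" for k
  proof (induction k)
    case 0
    have "baire_cylinder [] = UNIV" by (simp add: baire_cylinder_def)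
    then show ?case using bad0 by (simp add: st_def bad_def)
  next
    case (Suc k) then show ?case using next_pair by (auto simp: st_def)
  qed
  have st_Suc: "\<exists>i j. st (Suc k) = (fst (st k) @ [i], snd (st k) @ [j])" for k
    using next_pair[OF st_bad[of k]] by (simp add: st_def)
  define x where "x k = fst (st (Suc k)) ! k" for k
  define y where "y k = snd (st (Suc k)) ! k" for k
  have st_prefixes: "fst (st k) = map x [0..<k] \<and> snd (st k) = map y [0..<k]" for k
  proof (induction k)
    case 0 then show ?case by (simp add: st_def)
  next
    case (Suc k)
    obtain i j where e: "st (Suc k) = (fst (st k) @ [i], snd (st k) @ [j])" using st_Suc by blast
    have "x k = i" "y k = j" unfolding x_def y_def using e Suc by (auto simp: nth_append)
    then show ?case using Suc e by simp
  qed
  have "baire_cylinder (fst (st k)) = {z. \<forall>i<k. z i = x i}"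
    and "baire_cylinder (snd (st k)) = {z. \<forall>i<k. z i = y i}" for k
    using st_prefixes[of k] by (auto simp: baire_cylinder_def)
  then have "\<not> borel_separated (g ` {z. \<forall>i<k. z i = x i}) (g' ` {z. \<forall>i<k. z i = y i})" for k
    using st_bad[of k] unfolding bad_def by simp
  then show ?thesis by (intro exI allI)
qed

lemma lusin_separation:
  assumes g: "continuous_map baire_top cantor_top g" and g': "continuous_map baire_top cantor_top g'"
    and disj: "range g \<inter> range g' = {}"
  shows "borel_separated (range g) (range g')"
proof (rule ccontr)
  assume "\<not> borel_separated (range g) (range g')"
  from inseparable_points[OF this] obtain x y where
    bad: "\<forall>k. \<not> borel_separated (g ` {z. \<forall>i<k. z i = x i}) (g' ` {z. \<forall>i<k. z i = y i})"
    by (elim exE)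
  obtain n where n: "g x n \<noteq> g' y n" using disj by blast
  obtain m1 where m1: "\<forall>z. (\<forall>i<m1. z i = x i) \<longrightarrow> g z n = g x n"
    using g unfolding baire_top_def cantor_top_def continuous_map_seq_top_iff locally_determined_def
    by blast
  obtain m2 where m2: "\<forall>z. (\<forall>i<m2. z i = y i) \<longrightarrow> g' z n = g' y n"
    using g' unfolding baire_top_def cantor_top_def continuous_map_seq_top_iff locally_determined_def
    by blast
  define m where "m = max m1 m2"
  have "g ` {z. \<forall>i<m. z i = x i} \<subseteq> {\<sigma>. \<sigma> n = g x n}"
  proof
    fix a assume "a \<in> g ` {z. \<forall>i<m. z i = x i}"
    then obtain z where z: "\<forall>i<m. z i = x i" and a: "a = g z" by blast
    have "\<forall>i<m1. z i = x i" using z by (simp add: m_def)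
    with m1 have "g z n = g x n" by blast
    with a show "a \<in> {\<sigma>. \<sigma> n = g x n}" by simp
  qed
  moreover have "{\<sigma>. \<sigma> n = g x n} \<inter> g' ` {z. \<forall>i<m. z i = y i} = {}"
  proof -
    have "g' z n \<noteq> g x n" if z: "\<forall>i<m. z i = y i" for z
    proof -
      have "\<forall>i<m2. z i = y i" using z by (simp add: m_def)
      with m2 have "g' z n = g' y n" by blast
      with n show ?thesis by simp
    qed
    then show ?thesis by blast
  qed
  ultimately have "borel_separated (g ` {z. \<forall>i<m. z i = x i}) (g' ` {z. \<forall>i<m. z i = y i})"
    unfolding borel_separated_def by (intro bexI[OF _ cantor_borel_coordinate]) blast
  with bad show False by simp
qed

lemma suslin:
  assumes "analytic_in cantor_top A" and "analytic_in cantor_top (UNIV - A)"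
  shows "A \<in> cantor_borel"
proof -
  consider "A = {}" | "A = UNIV"
    | g g' where "continuous_map baire_top cantor_top g" "range g = A"
        "continuous_map baire_top cantor_top g'" "range g' = UNIV - A"
    using assms unfolding analytic_in_def by blast
  then show ?thesis
  proof cases
    case 1 then show ?thesis unfolding cantor_borel_def by (simp add: sigma_sets.Empty)
  next
    case 2 then show ?thesis unfolding cantor_borel_def by (simp add: sigma_sets_top)
  next
    case 3
    then obtain C where "C \<in> cantor_borel" "A \<subseteq> C" "C \<inter> (UNIV - A) = {}"
      using lusin_separation[of g g'] unfolding borel_separated_def by auto
    moreover from this have "C = A" by blast
    ultimately show ?thesis by simp
  qed
qed

lemma length_le_code:
  assumes h_len: "\<forall>s t. length s < length t \<longrightarrow> (h :: bool list \<Rightarrow> nat) s < h t"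
  shows "length s \<le> h s"
proof (induction "length s" arbitrary: s)
  case (Suc n)
  then have "n \<le> h (butlast s)" by (metis diff_Suc_1 length_butlast)
  moreover have "h (butlast s) < h s" using h_len Suc(2)[symmetric] by simp
  ultimately show ?case using Suc(2) by simp
qed simp

lemma enumerate_range_strict_mono:
  fixes f :: "nat \<Rightarrow> nat"
  assumes "strict_mono f"
  shows "enumerate (range f) n = f n"
proof (induction n)
  case 0
  show ?case unfolding enumerate_0
    using assms by (intro Least_equality) (auto simp: strict_mono_less_eq)
next
  case (Suc n)
  have "infinite (range f)" using assms strict_mono_imp_inj_on range_inj_infinite by blast
  then show ?case unfolding enumerate_Suc''[OF \<open>infinite (range f)\<close>] Suc
    using assms by (intro Least_equality) (auto simp: strict_mono_less strict_mono_less_eq)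
qed

definition coded_set :: "(bool list \<Rightarrow> nat) \<Rightarrow> (nat \<Rightarrow> bool list) \<Rightarrow> nat \<Rightarrow> bool" where
  "coded_set h w = (\<lambda>n. \<exists>k. n = h (w k))"

lemma coded_set:
  assumes h_len: "\<forall>s t. length s < length t \<longrightarrow> h s < h t" and w: "\<And>k. length (w k) = k"
  shows "infinite {n. coded_set h w n}"
    and "enumerate {n. coded_set h w n} k = h (w k)"
proof -
  have mono: "strict_mono (\<lambda>k. h (w k))" unfolding strict_mono_def using h_len w by simp
  have eq: "{n. coded_set h w n} = range (\<lambda>k. h (w k))" by (auto simp: coded_set_def)
  show "infinite {n. coded_set h w n}"
    unfolding eq using mono strict_mono_imp_inj_on range_inj_infinite by blast
  show "enumerate {n. coded_set h w n} k = h (w k)"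
    unfolding eq using enumerate_range_strict_mono[OF mono] .
qed

lemma fseq_coded_set:
  assumes "inj h" and "\<forall>s t. length s < length t \<longrightarrow> h s < h t" and "\<And>k. length (w k) = k"
  shows "fseq h (enumerate {n. coded_set h w n} k) \<tau> = indicator (Vs (w k)) \<tau>"
  using coded_set(2)[OF assms(2,3)] assms(1) by (simp add: fseq_def)

text \<open>If the k-th finite sequence depends only on the first k digits of \<sigma>, then the coded set
  depends continuously on \<sigma>: whether n is a code is decided by the first n digits.\<close>

lemma continuous_coded_set:
  assumes h_len: "\<forall>s t. length s < length t \<longrightarrow> h s < h t"
    and len: "\<And>\<sigma> k. length (w \<sigma> k) = k"
    and local: "\<And>\<sigma> \<sigma>' k. \<forall>i<k. \<sigma>' i = \<sigma> i \<Longrightarrow> w \<sigma>' k = w \<sigma> k"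
  shows "continuous_map cantor_top infsets_top (\<lambda>\<sigma>. coded_set h (w \<sigma>))"
proof (rule continuous_map_into_infsets)
  have "coded_set h (w \<sigma>') n = coded_set h (w \<sigma>) n" if agree: "\<forall>i<n. \<sigma>' i = \<sigma> i" for \<sigma> \<sigma>' n
  proof -
    have "w \<sigma>' k = w \<sigma> k" if "n = h (w \<tau> k)" for \<tau> k
    proof -
      have "k \<le> n" using that length_le_code[OF h_len, of "w \<tau> k"] len by simp
      then show ?thesis using agree by (intro local) auto
    qed
    then show ?thesis unfolding coded_set_def by metis
  qed
  then show "continuous_map cantor_top cantor_top (\<lambda>\<sigma>. coded_set h (w \<sigma>))"
    unfolding cantor_top_def continuous_map_seq_top_iff locally_determined_def by blast
  show "infinite {n. coded_set h (w \<sigma>) n}" for \<sigma> using coded_set(1)[OF h_len len] .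
qed

definition init_seg :: "(nat \<Rightarrow> bool) \<Rightarrow> nat \<Rightarrow> bool list" where
  "init_seg \<sigma> k = map \<sigma> [0..<k]"

definition zigzag_seg :: "(nat \<Rightarrow> bool) \<Rightarrow> nat \<Rightarrow> bool list" where
  "zigzag_seg \<sigma> j = (if even j then init_seg \<sigma> j else init_seg \<sigma> (j - 1) @ [\<not> \<sigma> (j - 1)])"

abbreviation branch_set :: "(bool list \<Rightarrow> nat) \<Rightarrow> (nat \<Rightarrow> bool) \<Rightarrow> nat \<Rightarrow> bool" where
  "branch_set h \<sigma> \<equiv> coded_set h (init_seg \<sigma>)"

abbreviation zigzag_set :: "(bool list \<Rightarrow> nat) \<Rightarrow> (nat \<Rightarrow> bool) \<Rightarrow> nat \<Rightarrow> bool" where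
  "zigzag_set h \<sigma> \<equiv> coded_set h (zigzag_seg \<sigma>)"

lemma length_init_seg [simp]: "length (init_seg \<sigma> k) = k"
  by (simp add: init_seg_def)

lemma length_zigzag_seg [simp]: "length (zigzag_seg \<sigma> j) = j"
  by (simp add: zigzag_seg_def)

lemma Vs_init_seg: "\<tau> \<in> Vs (init_seg \<sigma> k) \<longleftrightarrow> (\<forall>i<k. \<tau> i = \<sigma> i)"
  by (simp add: Vs_def init_seg_def)

lemma Vs_zigzag_seg_even: "even j \<Longrightarrow> \<tau> \<in> Vs (zigzag_seg \<sigma> j) \<longleftrightarrow> (\<forall>i<j. \<tau> i = \<sigma> i)"
  by (simp add: zigzag_seg_def Vs_init_seg)

lemma Vs_zigzag_seg_odd:
  assumes "odd j"
  shows "\<tau> \<in> Vs (zigzag_seg \<sigma> j) \<longleftrightarrow> (\<forall>i<j - 1. \<tau> i = \<sigma> i) \<and> \<tau> (j - 1) = (\<not> \<sigma> (j - 1))"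
proof -
  from assms obtain m where j: "j = Suc m" by (cases j) auto
  show ?thesis
    using assms unfolding j zigzag_seg_def Vs_def by (auto simp: init_seg_def nth_append less_Suc_eq)
qed

lemma continuous_branch_set:
  "\<forall>s t. length s < length t \<longrightarrow> h s < h t \<Longrightarrow>
     continuous_map cantor_top infsets_top (branch_set h)"
  by (rule continuous_coded_set) (simp_all add: init_seg_def)

lemma continuous_zigzag_set:
  assumes "\<forall>s t. length s < length t \<longrightarrow> h s < h t"
  shows "continuous_map cantor_top infsets_top (zigzag_set h)"
proof (rule continuous_coded_set[OF assms])
  show "zigzag_seg \<sigma>' k = zigzag_seg \<sigma> k" if "\<forall>i<k. \<sigma>' i = \<sigma> i" for \<sigma> \<sigma>' k
    using that by (cases k) (auto simp: zigzag_seg_def init_seg_def)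
qed simp

lemma eventually_not_in_Vs:
  assumes "\<tau> d \<noteq> \<sigma> d" and "\<And>k. k > Suc d \<Longrightarrow> \<tau> \<notin> Vs (w k)"
  shows "(\<lambda>k. indicator (Vs (w k)) \<tau> :: real) \<longlonglongrightarrow> 0"
proof (rule tendsto_eventually)
  show "\<forall>\<^sub>F k in sequentially. indicator (Vs (w k)) \<tau> = (0::real)"
    unfolding eventually_sequentially using assms(2) by (intro exI[of _ "Suc (Suc d)"]) auto
qed

lemma branch_indicators_tendsto:
  "(\<lambda>k. indicator (Vs (init_seg \<sigma> k)) \<tau> :: real) \<longlonglongrightarrow> (if \<tau> = \<sigma> then 1 else 0)"
proof (cases "\<tau> = \<sigma>")
  case False
  then obtain d where d: "\<tau> d \<noteq> \<sigma> d" by blast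
  have "\<tau> \<notin> Vs (init_seg \<sigma> k)" if "k > Suc d" for k
    using d that unfolding Vs_init_seg by (meson Suc_lessD)
  then show ?thesis using eventually_not_in_Vs[of \<tau> d \<sigma> "init_seg \<sigma>"] d False by simp
qed (simp add: Vs_init_seg)

lemma zigzag_indicators_convergent_iff:
  "convergent (\<lambda>k. indicator (Vs (zigzag_seg \<sigma> k)) \<tau> :: real) \<longleftrightarrow> \<tau> \<noteq> \<sigma>"
proof
  assume "\<tau> \<noteq> \<sigma>"
  then obtain d where d: "\<tau> d \<noteq> \<sigma> d" by blast
  have "\<tau> \<notin> Vs (zigzag_seg \<sigma> k)" if "k > Suc d" for k
  proof (cases "even k")
    case True then show ?thesis using d that unfolding Vs_zigzag_seg_even[OF True] by (meson Suc_lessD)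
  next
    case False then show ?thesis using d that by (auto simp: Vs_zigzag_seg_odd)
  qed
  then show "convergent (\<lambda>k. indicator (Vs (zigzag_seg \<sigma> k)) \<tau> :: real)"
    using eventually_not_in_Vs[of \<tau> d \<sigma> "zigzag_seg \<sigma>"] d unfolding convergent_def by blast
next
  assume "convergent (\<lambda>k. indicator (Vs (zigzag_seg \<sigma> k)) \<tau> :: real)"
  then obtain l where l: "(\<lambda>k. indicator (Vs (zigzag_seg \<sigma> k)) \<tau> :: real) \<longlonglongrightarrow> l"
    unfolding convergent_def by blast
  show "\<tau> \<noteq> \<sigma>"
  proof
    assume "\<tau> = \<sigma>"
    then have "(\<lambda>k. indicator (Vs (zigzag_seg \<sigma> (2 * k))) \<tau> :: real) = (\<lambda>_. 1)"
      and "(\<lambda>k. indicator (Vs (zigzag_seg \<sigma> (2 * k + 1))) \<tau> :: real) = (\<lambda>_. 0)"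
      by (auto simp: Vs_zigzag_seg_even Vs_zigzag_seg_odd)
    moreover have "(\<lambda>k. indicator (Vs (zigzag_seg \<sigma> (2 * k))) \<tau> :: real) \<longlonglongrightarrow> l"
      and "(\<lambda>k. indicator (Vs (zigzag_seg \<sigma> (2 * k + 1))) \<tau> :: real) \<longlonglongrightarrow> l"
      using LIMSEQ_subseq_LIMSEQ[OF l, of "\<lambda>k. 2 * k"] LIMSEQ_subseq_LIMSEQ[OF l, of "\<lambda>k. 2 * k + 1"]
      by (simp_all add: strict_mono_def o_def)
    ultimately have "1 = l" and "0 = l" by (simp_all add: LIMSEQ_const_iff)
    then show False by simp
  qed
qed

lemma branch_set_in_Lf:
  assumes "inj h" and "\<forall>s t. length s < length t \<longrightarrow> h s < h t"
  shows "branch_set h \<sigma> \<in> Lf h A"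
proof -
  have "convergent (\<lambda>k. indicator (Vs (init_seg \<sigma> k)) \<tau> :: real)" for \<tau>
    using branch_indicators_tendsto unfolding convergent_def by blast
  then show ?thesis
    using coded_set(1)[OF assms(2)] fseq_coded_set[OF assms] unfolding Lf_def by simp
qed

lemma branch_set_in_Lf0_iff:
  assumes "inj h" and "\<forall>s t. length s < length t \<longrightarrow> h s < h t"
  shows "branch_set h \<sigma> \<in> Lf0 h A \<longleftrightarrow> \<sigma> \<notin> A"
proof -
  have "(\<lambda>k. indicator (Vs (init_seg \<sigma> k)) \<tau> :: real) \<longlonglongrightarrow> 0 \<longleftrightarrow> \<tau> \<noteq> \<sigma>" for \<tau>
    using branch_indicators_tendsto[of \<sigma> \<tau>] LIMSEQ_unique by fastforce
  then show ?thesis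
    using coded_set(1)[OF assms(2)] fseq_coded_set[OF assms] unfolding Lf0_def by auto
qed

lemma zigzag_set_in_Lf_iff:
  assumes "inj h" and "\<forall>s t. length s < length t \<longrightarrow> h s < h t"
  shows "zigzag_set h \<sigma> \<in> Lf h A \<longleftrightarrow> \<sigma> \<notin> A"
  using coded_set(1)[OF assms(2)] fseq_coded_set[OF assms] zigzag_indicators_convergent_iff
  unfolding Lf_def by auto

text \<open>Ordinal bookkeeping in a well-order 'w all of whose proper initial segments are countable
  while 'w itself is uncountable (the situation of the first uncountable ordinal).\<close>

lemma countable_atMost_segment:
  assumes "\<forall>a::'w::wellorder. countable {b. b < a}"
  shows "countable {b::'w. b \<le> a}"
proof -
  have "{b. b \<le> a} = insert a {b. b < a}" by auto
  then show ?thesis using assms by simp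
qed

text \<open>Every countable subset of 'w is bounded, since 'w is not a countable union of segments.\<close>

lemma countable_set_bounded:
  fixes S :: "'w::wellorder set"
  assumes segs: "\<forall>a::'w. countable {b. b < a}" and unc: "uncountable (UNIV :: 'w set)"
    and "countable S"
  obtains \<beta> where "\<forall>x\<in>S. x \<le> \<beta>"
proof -
  have "countable (\<Union>x\<in>S. {b. b \<le> x})"
    using assms(3) countable_atMost_segment[OF segs] by blast
  then obtain \<beta> where "\<beta> \<notin> (\<Union>x\<in>S. {b. b \<le> x})" using unc by (metis UNIV_eq_I)
  then show ?thesis using that by (auto simp: not_le intro: less_imp_le)
qed

lemma countable_image_representatives:
  assumes "countable (f ` S)" and "S \<noteq> {}"
  obtains d :: "nat \<Rightarrow> 'a" where "range d \<subseteq> S" and "\<forall>x\<in>S. \<exists>k. f (d k) = f x"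
proof
  define e where "e = from_nat_into (f ` S)"
  have e: "range e = f ` S" unfolding e_def using assms by (simp add: range_from_nat_into)
  have "e k \<in> f ` S" for k using e by blast
  then show "range (\<lambda>k. inv_into S f (e k)) \<subseteq> S"
    by (auto intro: inv_into_into)
  show "\<forall>x\<in>S. \<exists>k. f (inv_into S f (e k)) = f x"
  proof
    fix x assume "x \<in> S"
    then obtain k where "e k = f x" using e by (metis imageI rangeE)
    then show "\<exists>k. f (inv_into S f (e k)) = f x" using \<open>x \<in> S\<close> by (metis f_inv_into_f imageI)
  qed
qed

text \<open>The key use of a Pi^1_1-rank \<phi> on B: comparing \<phi> at a continuous image F \<sigma> with the
  values of \<phi> along a continuous family G z of members of B is expressed by the analytic
  Sigma^1_1 relation of the rank, so the set of \<sigma> with F \<sigma> in B and \<phi> (F \<sigma>) dominated by some \<phi> (G z) is analytic.\<close>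

lemma analytic_rank_comparison:
  assumes rank: "pi11_rank X B \<phi>" and X: "Hausdorff_space X"
    and F: "continuous_map cantor_top X F"
    and G: "continuous_map baire_top X G" and GB: "range G \<subseteq> B"
  shows "analytic_in cantor_top {\<sigma>. F \<sigma> \<in> B \<and> (\<exists>z. \<phi> (F \<sigma>) \<le> \<phi> (G z))}"
proof -
  obtain R where R: "analytic_in (prod_topology X X) R"
    and R_iff: "\<And>x y. y \<in> B \<Longrightarrow> x \<in> topspace X \<Longrightarrow> (x, y) \<in> R \<longleftrightarrow> x \<in> B \<and> \<phi> x \<le> \<phi> y"
    using rank unfolding pi11_rank_def by blast
  define p where "p x = (F (fst x), G (snd x))" for x
  have "continuous_map (prod_topology cantor_top baire_top) (prod_topology X X) p"
    unfolding p_def continuous_map_pairwise o_def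
    using continuous_map_compose[OF continuous_map_fst F] continuous_map_compose[OF continuous_map_snd G]
    by (simp add: o_def) blast
  then have "analytic_in cantor_top {\<sigma>. \<exists>z. p (\<sigma>, z) \<in> R}"
    using analytic_exists_preimage[OF Hausdorff_space_prod_topology[THEN iffD2] R] X by blast
  moreover have "p (\<sigma>, z) \<in> R \<longleftrightarrow> F \<sigma> \<in> B \<and> \<phi> (F \<sigma>) \<le> \<phi> (G z)" for \<sigma> z
  proof -
    have "G z \<in> B" using GB by blast
    moreover have "F \<sigma> \<in> topspace X" using continuous_map_image_subset_topspace[OF F] by auto
    ultimately show ?thesis using R_iff by (simp add: p_def)
  qed
  then have "{\<sigma>. \<exists>z. p (\<sigma>, z) \<in> R} = {\<sigma>. F \<sigma> \<in> B \<and> (\<exists>z. \<phi> (F \<sigma>) \<le> \<phi> (G z))}"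
    by blast
  ultimately show ?thesis by simp
qed

lemma Hausdorff_infsets: "Hausdorff_space infsets_top"
  unfolding infsets_top_def cantor_top_def
  by (intro Hausdorff_space_subtopology) (simp add: Hausdorff_space_product_topology)

text \<open>Step one: a Pi^1_1-rank on L^A_f is bounded on the branch sets.  Otherwise every zigzag set
  in L^A_f would have rank dominated by that of some branch set, and the complement of A, which
  consists of exactly the \<sigma> whose zigzag set lies in L^A_f, would be analytic.\<close>

lemma Lf_rank_bounded_on_branches:
  assumes "inj h" and h_len: "\<forall>s t. length s < length t \<longrightarrow> h s < h t"
    and not_coanalytic: "\<not> analytic_in cantor_top (UNIV - A)"
    and rank: "pi11_rank infsets_top (Lf h A) \<phi>"
  shows "\<exists>a. \<forall>\<sigma>. \<phi> (branch_set h \<sigma>) \<le> a"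
proof (rule ccontr)
  assume "\<nexists>a. \<forall>\<sigma>. \<phi> (branch_set h \<sigma>) \<le> a"
  then have unbounded: "\<exists>\<tau>. a \<le> \<phi> (branch_set h \<tau>)" for a by (meson le_cases)
  define to_cantor where "to_cantor z = (\<lambda>i. z i \<noteq> (0::nat))" for z :: "nat \<Rightarrow> nat"
  have "continuous_map baire_top cantor_top to_cantor"
    unfolding baire_top_def cantor_top_def continuous_map_seq_top_iff to_cantor_def
    by (simp add: locally_determined_coordinate)
  then have G: "continuous_map baire_top infsets_top (branch_set h \<circ> to_cantor)"
    using continuous_branch_set[OF h_len] by (rule continuous_map_compose)
  have "range (branch_set h \<circ> to_cantor) \<subseteq> Lf h A"
    using branch_set_in_Lf[OF assms(1,2)] by auto
  from analytic_rank_comparison[OF rank Hausdorff_infsets continuous_zigzag_set[OF h_len] G this]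
  have "analytic_in cantor_top
      {\<sigma>. zigzag_set h \<sigma> \<in> Lf h A \<and> (\<exists>z. \<phi> (zigzag_set h \<sigma>) \<le> \<phi> (branch_set h (to_cantor z)))}"
    by simp
  moreover have "{\<sigma>. zigzag_set h \<sigma> \<in> Lf h A \<and>
      (\<exists>z. \<phi> (zigzag_set h \<sigma>) \<le> \<phi> (branch_set h (to_cantor z)))} = UNIV - A"
  proof -
    have "\<exists>z. \<phi> (zigzag_set h \<sigma>) \<le> \<phi> (branch_set h (to_cantor z))" for \<sigma>
    proof -
      obtain \<tau> where "\<phi> (zigzag_set h \<sigma>) \<le> \<phi> (branch_set h \<tau>)" using unbounded by blast
      moreover have "to_cantor (\<lambda>i. if \<tau> i then 1 else 0) = \<tau>" by (auto simp: to_cantor_def)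
      ultimately show ?thesis by metis
    qed
    then show ?thesis using zigzag_set_in_Lf_iff[OF assms(1,2)] by blast
  qed
  ultimately have "analytic_in cantor_top (UNIV - A)" by simp
  with not_coanalytic show False ..
qed

text \<open>Step two: a Pi^1_1-rank on L^A_{f,0} takes uncountably many values on the branch sets of
  points outside A.  Otherwise countably many such branch sets realise all these values, and
  comparing with them would again show that the complement of A is analytic.\<close>

lemma Lf0_rank_uncountable_on_branches:
  assumes "inj h" and h_len: "\<forall>s t. length s < length t \<longrightarrow> h s < h t"
    and not_coanalytic: "\<not> analytic_in cantor_top (UNIV - A)" and "A \<noteq> UNIV"
    and rank: "pi11_rank infsets_top (Lf0 h A) \<psi>"
  shows "uncountable ((\<lambda>\<sigma>. \<psi> (branch_set h \<sigma>)) ` (UNIV - A))"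
proof
  assume "countable ((\<lambda>\<sigma>. \<psi> (branch_set h \<sigma>)) ` (UNIV - A))"
  moreover have "UNIV - A \<noteq> {}" using \<open>A \<noteq> UNIV\<close> by auto
  ultimately obtain d :: "nat \<Rightarrow> nat \<Rightarrow> bool" where d_out: "range d \<subseteq> UNIV - A"
    and d_values: "\<forall>\<sigma>\<in>UNIV - A. \<exists>k. \<psi> (branch_set h (d k)) = \<psi> (branch_set h \<sigma>)"
    by (rule countable_image_representatives)
  define G where "G z = branch_set h (d (z 0))" for z :: "nat \<Rightarrow> nat"
  have "continuous_map baire_top cantor_top G"
    unfolding baire_top_def cantor_top_def continuous_map_seq_top_iff G_def
  proof
    show "locally_determined (\<lambda>z. branch_set h (d (z 0)) n)" for n
      using locally_determined_coordinate[of "\<lambda>a. branch_set h (d a) n" 0] .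
  qed
  then have "continuous_map baire_top infsets_top G"
    using coded_set(1)[OF h_len] by (intro continuous_map_into_infsets) (simp_all add: G_def)
  moreover have "range G \<subseteq> Lf0 h A"
    using d_out branch_set_in_Lf0_iff[OF assms(1,2)] by (auto simp: G_def)
  ultimately have "analytic_in cantor_top
      {\<sigma>. branch_set h \<sigma> \<in> Lf0 h A \<and> (\<exists>z. \<psi> (branch_set h \<sigma>) \<le> \<psi> (G z))}"
    by (rule analytic_rank_comparison[OF rank Hausdorff_infsets continuous_branch_set[OF h_len]])
  moreover have "{\<sigma>. branch_set h \<sigma> \<in> Lf0 h A \<and> (\<exists>z. \<psi> (branch_set h \<sigma>) \<le> \<psi> (G z))} = UNIV - A"
  proof -
    have "\<exists>z. \<psi> (branch_set h \<sigma>) \<le> \<psi> (G z)" if out: "\<sigma> \<in> UNIV - A" for \<sigma>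
    proof -
      obtain k where "\<psi> (branch_set h (d k)) = \<psi> (branch_set h \<sigma>)"
        using bspec[OF d_values out] by (elim exE)
      then have "\<psi> (branch_set h \<sigma>) \<le> \<psi> (G (\<lambda>_. k))" unfolding G_def by simp
      then show ?thesis by blast
    qed
    then show ?thesis using branch_set_in_Lf0_iff[OF assms(1,2)] by blast
  qed
  ultimately have "analytic_in cantor_top (UNIV - A)" by simp
  with not_coanalytic show False ..
qed

theorem mainTheorem18:
  fixes h :: "bool list \<Rightarrow> nat"
    and A :: "(nat \<Rightarrow> bool) set"
    and \<phi> \<psi> :: "(nat \<Rightarrow> bool) \<Rightarrow> 'w::wellorder"
  assumes h_bij: "bij h"
    and h_len: "\<forall>s t. length s < length t \<longrightarrow> h s < h t"
    and w_segs: "\<forall>a::'w. countable {b. b < a}"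
    and w_unc: "uncountable (UNIV :: 'w set)"
    and A_an: "analytic_in cantor_top A"
    and A_nb: "A \<notin> cantor_borel"
    and \<phi>_rank: "pi11_rank infsets_top (Lf h A) \<phi>"
    and \<psi>_rank: "pi11_rank infsets_top (Lf0 h A) \<psi>"
  shows "\<not> (\<exists>\<Phi> :: 'w \<Rightarrow> 'w. \<forall>L\<in>Lf0 h A. \<psi> L \<le> \<Phi> (\<phi> L))"
proof
  assume "\<exists>\<Phi> :: 'w \<Rightarrow> 'w. \<forall>L\<in>Lf0 h A. \<psi> L \<le> \<Phi> (\<phi> L)"
  then obtain \<Phi> :: "'w \<Rightarrow> 'w" where \<Phi>: "\<forall>L\<in>Lf0 h A. \<psi> L \<le> \<Phi> (\<phi> L)" by blast
  have "inj h" using h_bij by (rule bij_is_inj)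
  have not_coanalytic: "\<not> analytic_in cantor_top (UNIV - A)" using suslin A_an A_nb by blast
  have "A \<noteq> UNIV" using A_nb unfolding cantor_borel_def by (auto simp: sigma_sets_top)
  obtain a where a: "\<forall>\<sigma>. \<phi> (branch_set h \<sigma>) \<le> a"
    using Lf_rank_bounded_on_branches[OF \<open>inj h\<close> h_len not_coanalytic \<phi>_rank] by blast
  have "countable (\<Phi> ` {b. b \<le> a})" using countable_atMost_segment[OF w_segs] by blast
  then obtain \<beta> where \<beta>: "\<forall>x\<in>\<Phi> ` {b. b \<le> a}. x \<le> \<beta>"
    by (rule countable_set_bounded[OF w_segs w_unc])
  have "\<psi> (branch_set h \<sigma>) \<le> \<beta>" if "\<sigma> \<notin> A" for \<sigma>
  proof -
    have "\<psi> (branch_set h \<sigma>) \<le> \<Phi> (\<phi> (branch_set h \<sigma>))"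
      using \<Phi> branch_set_in_Lf0_iff[OF \<open>inj h\<close> h_len] that by blast
    also have "\<dots> \<le> \<beta>" using \<beta> a by blast
    finally show ?thesis .
  qed
  then have "(\<lambda>\<sigma>. \<psi> (branch_set h \<sigma>)) ` (UNIV - A) \<subseteq> {b. b \<le> \<beta>}" by blast
  then have "countable ((\<lambda>\<sigma>. \<psi> (branch_set h \<sigma>)) ` (UNIV - A))"
    using countable_atMost_segment[OF w_segs] by (rule countable_subset)
  then show False
    using Lf0_rank_uncountable_on_branches[OF \<open>inj h\<close> h_len not_coanalytic \<open>A \<noteq> UNIV\<close> \<psi>_rank]
    by blast
qed

end
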